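(* For every topological space $X$, the simplicial set $S_*^M(X)$ is a Kan complex.
   Context: A continuous multivalued map $X\to Y$ is a subset $T\subset X\times Y$ such that the restriction of the projection $X\times Y\to X$ to $T$ is proper (universally closed), surjective and has finite fibers; $M(X,Y)$ is the set of these. For a continuous map $f:A\to B$ and $\alpha\in M(B,X)$, set $\alpha\circ\mathrm{gr}(f)=\{(a,x)\in A\times X:(f(a),x)\in\alpha\}\in M(A,X)$. Let $\Delta_n=\{(t_0,\dots,t_n)\in\mathbb{R}^{n+1}:t_i\ge 0,\sum t_i=1\}$ with the standard coface maps $\delta^n_i:\Delta_{n-1}\to\Delta_n$ (inserting $0$ in position $i$) and codegeneracy maps $\sigma^n_i:\Delta_{n+1}\to\Delta_n$ (adding coordinates $i$ and $i+1$). $S_*^M(X)$ is the simplicial set with $S_n^M(X)=M(\Delta_n,X)$, face maps $\alpha\mapsto\alpha\circ\mathrm{gr}(\delta^n_i)$ and degeneracy maps $\alpha\mapsto\alpha\circ\mathrm{gr}(\sigma^n_i)$. *)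

theory Defs
  imports "HOL-Analysis.Analysis" "HOL-Homology.Homology"
begin

definition mv_maps :: "'a topology \<Rightarrow> 'b topology \<Rightarrow> ('a \<times> 'b) set set" where
  "mv_maps X Y =
     {T. T \<subseteq> topspace X \<times> topspace Y
        \<and> proper_map (subtopology (prod_topology X Y) T) X fst
        \<and> fst ` T = topspace X
        \<and> (\<forall>x\<in>topspace X. finite {y. (x, y) \<in> T})}"

definition mv_comp_graph :: "'c topology \<Rightarrow> ('c \<Rightarrow> 'a) \<Rightarrow> ('a \<times> 'b) set \<Rightarrow> ('c \<times> 'b) set" where
  "mv_comp_graph A f \<alpha> = {(a, x). a \<in> topspace A \<and> (f a, x) \<in> \<alpha>}"

definition simplex_top :: "nat \<Rightarrow> (nat \<Rightarrow> real) topology" where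
  "simplex_top n = subtopology (powertop_real UNIV) (standard_simplex n)"

text \<open>Codegeneracy sigma_i : Delta_(n+1) to Delta_n, adding coordinates i and i+1.
  (Coface delta_i is the library's simplical_face i, inserting 0 at position i.)\<close>
definition codegeneracy :: "nat \<Rightarrow> (nat \<Rightarrow> real) \<Rightarrow> nat \<Rightarrow> real" where
  "codegeneracy i t = (\<lambda>j. if j < i then t j else if j = i then t i + t (Suc i) else t (Suc j))"

definition SM :: "'a topology \<Rightarrow> nat \<Rightarrow> ((nat \<Rightarrow> real) \<times> 'a) set set" where
  "SM X n = mv_maps (simplex_top n) X"

definition SM_face :: "nat \<Rightarrow> nat \<Rightarrow> ((nat \<Rightarrow> real) \<times> 'a) set \<Rightarrow> ((nat \<Rightarrow> real) \<times> 'a) set" where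
  "SM_face n i \<alpha> = mv_comp_graph (simplex_top (n - 1)) (simplical_face i) \<alpha>"

definition SM_degen :: "nat \<Rightarrow> nat \<Rightarrow> ((nat \<Rightarrow> real) \<times> 'a) set \<Rightarrow> ((nat \<Rightarrow> real) \<times> 'a) set" where
  "SM_degen n i \<alpha> = mv_comp_graph (simplex_top (Suc n)) (codegeneracy i) \<alpha>"

definition simplicial_set ::
  "(nat \<Rightarrow> 's set) \<Rightarrow> (nat \<Rightarrow> nat \<Rightarrow> 's \<Rightarrow> 's) \<Rightarrow> (nat \<Rightarrow> nat \<Rightarrow> 's \<Rightarrow> 's) \<Rightarrow> bool" where
  "simplicial_set S d s \<longleftrightarrow>
     (\<forall>n i. 1 \<le> n \<and> i \<le> n \<longrightarrow> (\<forall>x\<in>S n. d n i x \<in> S (n - 1)))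
   \<and> (\<forall>n i. i \<le> n \<longrightarrow> (\<forall>x\<in>S n. s n i x \<in> S (Suc n)))
   \<and> (\<forall>n i j. 2 \<le> n \<and> i < j \<and> j \<le> n \<longrightarrow>
        (\<forall>x\<in>S n. d (n - 1) i (d n j x) = d (n - 1) (j - 1) (d n i x)))
   \<and> (\<forall>n i j. i < j \<and> j \<le> n \<longrightarrow>
        (\<forall>x\<in>S n. d (Suc n) i (s n j x) = s (n - 1) (j - 1) (d n i x)))
   \<and> (\<forall>n j. j \<le> n \<longrightarrow>
        (\<forall>x\<in>S n. d (Suc n) j (s n j x) = x \<and> d (Suc n) (Suc j) (s n j x) = x))
   \<and> (\<forall>n i j. Suc j < i \<and> i \<le> Suc n \<longrightarrow>
        (\<forall>x\<in>S n. d (Suc n) i (s n j x) = s (n - 1) j (d n (i - 1) x)))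
   \<and> (\<forall>n i j. i \<le> j \<and> j \<le> n \<longrightarrow>
        (\<forall>x\<in>S n. s (Suc n) i (s n j x) = s (Suc n) (Suc j) (s n i x)))"

definition kan_complex ::
  "(nat \<Rightarrow> 's set) \<Rightarrow> (nat \<Rightarrow> nat \<Rightarrow> 's \<Rightarrow> 's) \<Rightarrow> (nat \<Rightarrow> nat \<Rightarrow> 's \<Rightarrow> 's) \<Rightarrow> bool" where
  "kan_complex S d s \<longleftrightarrow> simplicial_set S d s \<and>
     (\<forall>n k (x :: nat \<Rightarrow> 's). 1 \<le> n \<and> k \<le> n
        \<and> (\<forall>i. i \<le> n \<and> i \<noteq> k \<longrightarrow> x i \<in> S (n - 1))
        \<and> (\<forall>i j. i < j \<and> j \<le> n \<and> i \<noteq> k \<and> j \<noteq> k \<longrightarrow>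
              d (n - 1) i (x j) = d (n - 1) (j - 1) (x i))
        \<longrightarrow> (\<exists>y\<in>S n. \<forall>i. i \<le> n \<and> i \<noteq> k \<longrightarrow> d n i y = x i))"

end

theory Submission
  imports Defs
begin

(* Over a compact Hausdorff space A, a multivalued map A to X is the same as a compact subset of
   A x X that surjects onto A and has finite fibres; such sets pull back along continuous maps, so
   S^M(X) is a simplicial set. Given a horn x_i (i ~= k) in S^M(X), push each x_i forward along
   the coface delta_i and take the union G, a compact set over the horn Lambda^n_k in Delta_n.
   The compatibility conditions say exactly that a point of Delta_n lying on two faces i < j
   carries the same values in x_i and x_j, so pulling G back along delta_i returns x_i.
   Composing G with the retraction of Delta_n onto Lambda^n_k that subtracts h = min_{i ~= k} t_i
   from every coordinate and adds (n+1) h to t_k yields the filler. *)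

lemma mv_maps_compact_kc_space:
  assumes "compact_space A" "kc_space A"
  shows "T \<in> mv_maps A X \<longleftrightarrow>
           compactin (prod_topology A X) T \<and> fst ` T = topspace A
           \<and> (\<forall>a\<in>topspace A. finite {x. (a, x) \<in> T})"
proof -
  let ?P = "prod_topology A X"
  have "T \<subseteq> topspace ?P \<and> proper_map (subtopology ?P T) A fst \<longleftrightarrow> compactin ?P T"
    if T: "fst ` T = topspace A"
  proof (intro iffI conjI)
    assume T': "T \<subseteq> topspace ?P \<and> proper_map (subtopology ?P T) A fst"
    then have "compact_space (subtopology ?P T)"
      by (intro compact_space_proper_map_preimage[of _ A fst] conjunct2[OF T'])
        (use T T' assms in \<open>auto simp: Int_absorb1\<close>)
    then show "compactin ?P T"
      using T' by (simp add: compactin_subspace)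
  next
    assume "compactin ?P T"
    then show "T \<subseteq> topspace ?P"
      by (rule compactin_subset_topspace)
    show "proper_map (subtopology ?P T) A fst"
      using \<open>compactin ?P T\<close>
      by (intro continuous_imp_proper_map compact_space_subtopology assms(2)
          continuous_map_from_subtopology continuous_map_fst)
  qed
  then show ?thesis
    unfolding mv_maps_def by auto
qed

lemma compactin_mv_comp_graph:
  assumes "compact_space A" "kc_space B" "continuous_map A B f"
    and T: "compactin (prod_topology B X) T"
  shows "compactin (prod_topology A X) (mv_comp_graph A f T)"
proof -
  have "proper_map A B f"
    using assms by (intro continuous_imp_proper_map)
  then have "proper_map (prod_topology A X) (prod_topology B X) (map_prod f id)"
    by (simp add: map_prod_def proper_map_prod proper_map_id[unfolded id_def])
  then have "compactin (prod_topology A X) {p \<in> topspace (prod_topology A X). map_prod f id p \<in> T}"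
    using T by (rule compactin_proper_map_preimage)
  moreover have "{p \<in> topspace (prod_topology A X). map_prod f id p \<in> T} = mv_comp_graph A f T"
    using compactin_subset_topspace[OF T] by (auto simp: mv_comp_graph_def)
  ultimately show ?thesis
    by simp
qed

lemma mv_comp_graph_compactin_in_mv_maps:
  assumes A: "compact_space A" "kc_space A" and "kc_space B" "continuous_map A B f"
    and T: "compactin (prod_topology B X) T" "f ` topspace A \<subseteq> fst ` T"
    and fin: "\<And>a. a \<in> topspace A \<Longrightarrow> finite {x. (f a, x) \<in> T}"
  shows "mv_comp_graph A f T \<in> mv_maps A X"
  unfolding mv_maps_compact_kc_space[OF A]
proof (intro conjI ballI)
  show "compactin (prod_topology A X) (mv_comp_graph A f T)"
    using assms by (intro compactin_mv_comp_graph)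
  show "fst ` mv_comp_graph A f T = topspace A"
    using T(2) by (force simp: mv_comp_graph_def)
  show "finite {x. (a, x) \<in> mv_comp_graph A f T}" if "a \<in> topspace A" for a
    using fin[OF that] that by (simp add: mv_comp_graph_def)
qed

lemma mv_comp_graph_in_mv_maps:
  assumes A: "compact_space A" "kc_space A" and B: "compact_space B" "kc_space B"
    and f: "continuous_map A B f" and \<alpha>: "\<alpha> \<in> mv_maps B X"
  shows "mv_comp_graph A f \<alpha> \<in> mv_maps A X"
  using \<alpha> continuous_map_image_subset_topspace[OF f]
  by (intro mv_comp_graph_compactin_in_mv_maps[OF A B(2) f]) (auto simp: mv_maps_compact_kc_space[OF B])

lemma mv_comp_graph_comp:
  "(\<And>a. a \<in> topspace A \<Longrightarrow> f a \<in> topspace B) \<Longrightarrow>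
     mv_comp_graph A f (mv_comp_graph B g \<alpha>) = mv_comp_graph A (g \<circ> f) \<alpha>"
  by (auto simp: mv_comp_graph_def)

lemma mv_comp_graph_cong:
  "(\<And>a. a \<in> topspace A \<Longrightarrow> f a = g a) \<Longrightarrow> mv_comp_graph A f \<alpha> = mv_comp_graph A g \<alpha>"
  by (auto simp: mv_comp_graph_def)

lemma mv_comp_graph_commute:
  assumes "\<And>a. a \<in> topspace A \<Longrightarrow> f a \<in> topspace B \<and> f' a \<in> topspace B' \<and> g (f a) = g' (f' a)"
  shows "mv_comp_graph A f (mv_comp_graph B g \<alpha>) = mv_comp_graph A f' (mv_comp_graph B' g' \<alpha>)"
  using assms by (auto simp: mv_comp_graph_def)

lemma mv_comp_graph_section:
  assumes "\<And>a. a \<in> topspace A \<Longrightarrow> f a \<in> topspace B \<and> g (f a) = a"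
    and "\<alpha> \<subseteq> topspace A \<times> UNIV"
  shows "mv_comp_graph A f (mv_comp_graph B g \<alpha>) = \<alpha>"
  using assms by (auto simp: mv_comp_graph_def)

lemma topspace_simplex_top [simp]: "topspace (simplex_top n) = standard_simplex n"
  by (simp add: simplex_top_def)

lemma compact_space_simplex_top [simp]: "compact_space (simplex_top n)"
  by (simp add: simplex_top_def compact_space_subtopology compactin_standard_simplex)

lemma kc_space_simplex_top [simp]: "kc_space (simplex_top n)"
  unfolding simplex_top_def
  by (intro Hausdorff_imp_kc_space Hausdorff_space_subtopology)
    (simp add: Hausdorff_space_product_topology)

lemma continuous_map_simplex_top:
  assumes "f \<in> standard_simplex m \<rightarrow> standard_simplex n"
    and "\<And>i. continuous_map (powertop_real UNIV) euclideanreal (\<lambda>t. f t i)"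
  shows "continuous_map (simplex_top m) (simplex_top n) f"
  using assms
  by (auto simp: simplex_top_def continuous_map_in_subtopology continuous_map_componentwise_UNIV
      intro: continuous_map_from_subtopology)

lemma continuous_map_simplical_face:
  assumes "1 \<le> n" "k \<le> n"
  shows "continuous_map (simplex_top (n - 1)) (simplex_top n) (simplical_face k)"
proof (rule continuous_map_simplex_top)
  show "simplical_face k \<in> standard_simplex (n - 1) \<rightarrow> standard_simplex n"
    using assms by (auto intro!: simplical_face_in_standard_simplex)
  show "continuous_map (powertop_real UNIV) euclideanreal (\<lambda>t. simplical_face k t i)" for i
    by (auto simp: simplical_face_def intro: continuous_map_product_projection)
qed

lemma sum_codegeneracy:
  assumes "i \<le> n"
  shows "(\<Sum>j\<le>n. codegeneracy i t j) = (\<Sum>j\<le>Suc n. t j)"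
  using assms
proof (induction n rule: dec_induct)
  case base
  have "(\<Sum>j<i. codegeneracy i t j) = (\<Sum>j<i. t j)"
    by (rule sum.cong) (auto simp: codegeneracy_def)
  then show ?case
    by (simp add: lessThan_Suc_atMost[symmetric] codegeneracy_def)
next
  case (step m)
  then show ?case
    by (simp add: codegeneracy_def)
qed

lemma standard_simplexI:
  assumes "\<And>j. 0 \<le> t j" "(\<Sum>j\<le>n. t j) = 1" "\<And>j. n < j \<Longrightarrow> t j = 0"
  shows "t \<in> standard_simplex n"
proof -
  have "t j \<le> 1" for j
  proof (cases "j \<le> n")
    case True
    then have "t j \<le> (\<Sum>j\<le>n. t j)"
      by (intro member_le_sum) (auto simp: assms(1))
    then show ?thesis
      using assms(2) by simp
  qed (use assms(3) in simp)
  then show ?thesis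
    using assms by (simp add: standard_simplex_def)
qed

lemma codegeneracy_in_standard_simplex:
  assumes "i \<le> n" "t \<in> standard_simplex (Suc n)"
  shows "codegeneracy i t \<in> standard_simplex n"
  using assms sum_codegeneracy[OF assms(1), of t]
  by (intro standard_simplexI) (auto simp: standard_simplex_def codegeneracy_def)

lemma continuous_map_codegeneracy:
  assumes "i \<le> n"
  shows "continuous_map (simplex_top (Suc n)) (simplex_top n) (codegeneracy i)"
proof (rule continuous_map_simplex_top)
  show "codegeneracy i \<in> standard_simplex (Suc n) \<rightarrow> standard_simplex n"
    using assms codegeneracy_in_standard_simplex by blast
  show "continuous_map (powertop_real UNIV) euclideanreal (\<lambda>t. codegeneracy i t j)" for j
    by (auto simp: codegeneracy_def intro!: continuous_map_product_projection continuous_map_add)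
qed

lemma simplical_face_simplical_face:
  "i < j \<Longrightarrow> simplical_face j (simplical_face i c) = simplical_face i (simplical_face (j - 1) c)"
  by (rule ext) (auto simp: simplical_face_def)

lemma simplical_face_eq_iff [simp]: "simplical_face i b = simplical_face i b' \<longleftrightarrow> b = b'"
proof
  assume eq: "simplical_face i b = simplical_face i b'"
  show "b = b'"
  proof
    fix j
    have "simplical_face i b (if j < i then j else Suc j) = simplical_face i b' (if j < i then j else Suc j)"
      using eq by simp
    then show "b j = b' j"
      by (auto simp: simplical_face_def split: if_splits)
  qed
qed simp

lemma codegeneracy_simplical_face_same: "codegeneracy j (simplical_face j a) = a"
  by (rule ext) (auto simp: simplical_face_def codegeneracy_def)

lemma codegeneracy_simplical_face_Suc: "codegeneracy j (simplical_face (Suc j) a) = a"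
  by (rule ext) (auto simp: simplical_face_def codegeneracy_def)

lemma codegeneracy_simplical_face_less:
  "i < j \<Longrightarrow> codegeneracy j (simplical_face i a) = simplical_face i (codegeneracy (j - 1) a)"
  by (rule ext) (auto simp: simplical_face_def codegeneracy_def)

lemma codegeneracy_simplical_face_greater:
  "Suc j < i \<Longrightarrow> codegeneracy j (simplical_face i a) = simplical_face (i - 1) (codegeneracy j a)"
  by (rule ext) (auto simp: simplical_face_def codegeneracy_def)

lemma codegeneracy_codegeneracy:
  "i \<le> j \<Longrightarrow> codegeneracy j (codegeneracy i a) = codegeneracy i (codegeneracy (Suc j) a)"
  by (rule ext) (auto simp: codegeneracy_def)

lemma simplical_face_codegeneracy: "t i = 0 \<Longrightarrow> simplical_face i (codegeneracy i t) = t"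
  by (rule ext) (auto simp: simplical_face_def codegeneracy_def)

lemma codegeneracy_zero_coordinate_in_standard_simplex:
  assumes t: "t \<in> standard_simplex m" and "i \<le> m" "t i = 0"
  shows "codegeneracy i t \<in> standard_simplex (m - 1)"
proof -
  have sum: "(\<Sum>j\<le>m. t j) = 1" and tail: "\<And>j. m < j \<Longrightarrow> t j = 0"
    using t by (auto simp: standard_simplex_def)
  obtain p where p: "m = Suc p"
    using sum assms by (cases m) auto
  show ?thesis
  proof (cases "i \<le> p")
    case True
    then show ?thesis
      using codegeneracy_in_standard_simplex t p by simp
  next
    case False
    then have "i = m"
      using assms p by simp
    then have "codegeneracy i t j = t j" for j
      using tail \<open>t i = 0\<close> p by (auto simp: codegeneracy_def)
    then show ?thesis
      using t sum tail \<open>i = m\<close> \<open>t i = 0\<close> p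
      by (intro standard_simplexI) (auto simp: standard_simplex_def dest: Suc_lessI)
  qed
qed

lemma SM_face_in_SM:
  assumes "1 \<le> n" "i \<le> n" "x \<in> SM X n"
  shows "SM_face n i x \<in> SM X (n - 1)"
  unfolding SM_face_def SM_def
  by (rule mv_comp_graph_in_mv_maps)
    (use assms continuous_map_simplical_face[OF assms(1,2)] in \<open>simp_all add: SM_def\<close>)

lemma SM_degen_in_SM:
  assumes "i \<le> n" "x \<in> SM X n"
  shows "SM_degen n i x \<in> SM X (Suc n)"
  unfolding SM_degen_def SM_def
  by (rule mv_comp_graph_in_mv_maps)
    (use assms continuous_map_codegeneracy[OF assms(1)] in \<open>simp_all add: SM_def\<close>)

lemma SM_subset: "x \<in> SM X n \<Longrightarrow> x \<subseteq> standard_simplex n \<times> UNIV"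
  unfolding SM_def mv_maps_def by auto

lemma SM_simplicial_set: "simplicial_set (SM X) SM_face SM_degen"
  unfolding simplicial_set_def
proof (intro conjI allI impI ballI)
  fix n i :: nat and x :: "((nat \<Rightarrow> real) \<times> 'a) set"
  assume "1 \<le> n \<and> i \<le> n" "x \<in> SM X n"
  then show "SM_face n i x \<in> SM X (n - 1)"
    by (intro SM_face_in_SM) auto
next
  fix n i :: nat and x :: "((nat \<Rightarrow> real) \<times> 'a) set"
  assume "i \<le> n" "x \<in> SM X n"
  then show "SM_degen n i x \<in> SM X (Suc n)"
    by (rule SM_degen_in_SM)
next
  fix n i j :: nat and x :: "((nat \<Rightarrow> real) \<times> 'a) set"
  assume "2 \<le> n \<and> i < j \<and> j \<le> n"
  then show "SM_face (n - 1) i (SM_face n j x) = SM_face (n - 1) (j - 1) (SM_face n i x)"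
    unfolding SM_face_def
    by (intro mv_comp_graph_commute)
      (auto simp: simplical_face_simplical_face simplical_face_in_standard_simplex)
next
  fix n i j :: nat and x :: "((nat \<Rightarrow> real) \<times> 'a) set"
  assume ij: "i < j \<and> j \<le> n"
  then have n: "Suc (n - 1) = n"
    by auto
  show "SM_face (Suc n) i (SM_degen n j x) = SM_degen (n - 1) (j - 1) (SM_face n i x)"
    unfolding SM_face_def SM_degen_def diff_Suc_1 n using ij
    by (intro mv_comp_graph_commute)
      (auto simp: codegeneracy_simplical_face_less simplical_face_in_standard_simplex
         codegeneracy_in_standard_simplex)
next
  fix n j :: nat and x :: "((nat \<Rightarrow> real) \<times> 'a) set"
  assume "j \<le> n" "x \<in> SM X n"
  then show "SM_face (Suc n) j (SM_degen n j x) = x" "SM_face (Suc n) (Suc j) (SM_degen n j x) = x"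
    unfolding SM_face_def SM_degen_def using SM_subset[of x X n]
    by (auto intro!: mv_comp_graph_section simp: codegeneracy_simplical_face_same
        codegeneracy_simplical_face_Suc simplical_face_in_standard_simplex)
next
  fix n i j :: nat and x :: "((nat \<Rightarrow> real) \<times> 'a) set"
  assume ij: "Suc j < i \<and> i \<le> Suc n"
  then have n: "Suc (n - 1) = n"
    by auto
  show "SM_face (Suc n) i (SM_degen n j x) = SM_degen (n - 1) j (SM_face n (i - 1) x)"
    unfolding SM_face_def SM_degen_def diff_Suc_1 n using ij
    by (intro mv_comp_graph_commute)
      (auto simp: codegeneracy_simplical_face_greater simplical_face_in_standard_simplex
         codegeneracy_in_standard_simplex)
next
  fix n i j :: nat and x :: "((nat \<Rightarrow> real) \<times> 'a) set"
  assume "i \<le> j \<and> j \<le> n"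
  then show "SM_degen (Suc n) i (SM_degen n j x) = SM_degen (Suc n) (Suc j) (SM_degen n i x)"
    unfolding SM_degen_def
    by (intro mv_comp_graph_commute) (auto simp: codegeneracy_codegeneracy codegeneracy_in_standard_simplex)
qed

lemma continuous_map_Min:
  assumes "finite I" "I \<noteq> {}" "\<And>i. i \<in> I \<Longrightarrow> continuous_map X euclideanreal (g i)"
  shows "continuous_map X euclideanreal (\<lambda>x. Min ((\<lambda>i. g i x) ` I))"
  using assms
proof (induction I rule: finite_ne_induct)
  case (insert a F)
  then show ?case
    by (simp add: continuous_map_real_min)
qed simp

definition horn_min :: "nat \<Rightarrow> nat \<Rightarrow> (nat \<Rightarrow> real) \<Rightarrow> real" where
  "horn_min n k t = Min (t ` ({..n} - {k}))"

definition horn :: "nat \<Rightarrow> nat \<Rightarrow> (nat \<Rightarrow> real) set" where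
  "horn n k = {t \<in> standard_simplex n. \<exists>i\<le>n. i \<noteq> k \<and> t i = 0}"

definition horn_retraction :: "nat \<Rightarrow> nat \<Rightarrow> (nat \<Rightarrow> real) \<Rightarrow> nat \<Rightarrow> real" where
  "horn_retraction n k t i =
     (if i \<le> n then if i = k then t i + real n * horn_min n k t else t i - horn_min n k t else t i)"

lemma horn_min_le: "i \<le> n \<Longrightarrow> i \<noteq> k \<Longrightarrow> horn_min n k t \<le> t i"
  unfolding horn_min_def by (rule Min_le) auto

lemma horn_min_attained:
  assumes "1 \<le> n"
  obtains i where "i \<le> n" "i \<noteq> k" "t i = horn_min n k t"
proof -
  have "{..n} - {k} \<noteq> {}"
    using assms by (cases "k = 0") auto
  then have "horn_min n k t \<in> t ` ({..n} - {k})"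
    unfolding horn_min_def by (intro Min_in) auto
  then obtain i where "i \<in> {..n} - {k}" "horn_min n k t = t i"
    by (rule imageE)
  then show ?thesis
    using that[of i] by simp
qed

lemma horn_min_nonneg:
  assumes "1 \<le> n" "t \<in> standard_simplex n"
  shows "0 \<le> horn_min n k t"
proof -
  obtain i where "t i = horn_min n k t"
    using horn_min_attained[OF assms(1)] .
  moreover have "0 \<le> t i"
    using assms(2) by (simp add: standard_simplex_def)
  ultimately show ?thesis
    by simp
qed

lemma horn_retraction_in_standard_simplex:
  assumes n: "1 \<le> n" "k \<le> n" and t: "t \<in> standard_simplex n"
  shows "horn_retraction n k t \<in> standard_simplex n"
proof (rule standard_simplexI)
  let ?h = "horn_min n k t"
  have "(\<Sum>j\<le>n. horn_retraction n k t j) = (\<Sum>j\<le>n. t j - ?h + (if j = k then (real n + 1) * ?h else 0))"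
    by (rule sum.cong) (auto simp: horn_retraction_def algebra_simps)
  also have "\<dots> = (\<Sum>j\<le>n. t j)"
    using n by (simp add: sum.distrib sum_subtractf)
  finally show "(\<Sum>j\<le>n. horn_retraction n k t j) = 1"
    using t by (simp add: standard_simplex_def)
  show "0 \<le> horn_retraction n k t j" for j
    using horn_min_le[of j n k t] horn_min_nonneg[OF n(1) t, of k] t
    by (auto simp: horn_retraction_def standard_simplex_def)
  show "horn_retraction n k t j = 0" if "n < j" for j
    using that t by (simp add: horn_retraction_def standard_simplex_def)
qed

lemma horn_retraction_in_horn:
  assumes "1 \<le> n" "k \<le> n" "t \<in> standard_simplex n"
  shows "horn_retraction n k t \<in> horn n k"
proof -
  obtain i where "i \<le> n" "i \<noteq> k" "t i = horn_min n k t"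
    using horn_min_attained[OF assms(1)] .
  then show ?thesis
    using horn_retraction_in_standard_simplex[OF assms] by (auto simp: horn_def horn_retraction_def)
qed

lemma horn_retraction_fixpoint:
  assumes "1 \<le> n" "t \<in> horn n k"
  shows "horn_retraction n k t = t"
proof -
  obtain i where "i \<le> n" "i \<noteq> k" "t i = 0" "t \<in> standard_simplex n"
    using assms(2) by (auto simp: horn_def)
  then have "horn_min n k t = 0"
    using horn_min_le[of i n k t] horn_min_nonneg[OF assms(1), of t k] by simp
  then show ?thesis
    by (auto simp: horn_retraction_def)
qed

lemma continuous_map_horn_retraction:
  assumes "1 \<le> n" "k \<le> n"
  shows "continuous_map (simplex_top n) (simplex_top n) (horn_retraction n k)"
proof (rule continuous_map_simplex_top)
  show "horn_retraction n k \<in> standard_simplex n \<rightarrow> standard_simplex n"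
    using assms horn_retraction_in_standard_simplex by blast
  have "{..n} - {k} \<noteq> {}"
    using assms by (cases "k = 0") auto
  then have "continuous_map (powertop_real UNIV) euclideanreal (horn_min n k)"
    unfolding horn_min_def by (auto intro!: continuous_map_Min continuous_map_product_projection)
  then show "continuous_map (powertop_real UNIV) euclideanreal (\<lambda>t. horn_retraction n k t i)" for i
    by (auto simp: horn_retraction_def intro!: continuous_map_product_projection continuous_map_add
        continuous_map_diff continuous_map_real_mult_left)
qed

definition horn_glue ::
  "nat \<Rightarrow> nat \<Rightarrow> (nat \<Rightarrow> ((nat \<Rightarrow> real) \<times> 'a) set) \<Rightarrow> ((nat \<Rightarrow> real) \<times> 'a) set" where
  "horn_glue n k x = (\<Union>i\<in>{..n} - {k}. map_prod (simplical_face i) id ` x i)"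

definition horn_filler ::
  "nat \<Rightarrow> nat \<Rightarrow> (nat \<Rightarrow> ((nat \<Rightarrow> real) \<times> 'a) set) \<Rightarrow> ((nat \<Rightarrow> real) \<times> 'a) set" where
  "horn_filler n k x = mv_comp_graph (simplex_top n) (horn_retraction n k) (horn_glue n k x)"

lemma mem_horn_glue:
  "(a, z) \<in> horn_glue n k x \<longleftrightarrow> (\<exists>i b. i \<le> n \<and> i \<noteq> k \<and> a = simplical_face i b \<and> (b, z) \<in> x i)"
  unfolding horn_glue_def by force

lemma simplical_face_in_horn:
  "1 \<le> n \<Longrightarrow> i \<le> n \<Longrightarrow> i \<noteq> k \<Longrightarrow> b \<in> standard_simplex (n - 1) \<Longrightarrow> simplical_face i b \<in> horn n k"
  using simplical_face_in_standard_simplex[of n i b] by (auto simp: horn_def simplical_face_def)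

lemma compactin_horn_glue:
  assumes "1 \<le> n" and x: "\<And>i. i \<le> n \<Longrightarrow> i \<noteq> k \<Longrightarrow> compactin (prod_topology (simplex_top (n - 1)) X) (x i)"
  shows "compactin (prod_topology (simplex_top n) X) (horn_glue n k x)"
  unfolding horn_glue_def
proof (rule compactin_Union)
  fix S
  assume "S \<in> (\<lambda>i. map_prod (simplical_face i) id ` x i) ` ({..n} - {k})"
  then obtain i where i: "i \<le> n" "i \<noteq> k" and S: "S = map_prod (simplical_face i) id ` x i"
    by blast
  have "continuous_map (prod_topology (simplex_top (n - 1)) X) (prod_topology (simplex_top n) X)
          (map_prod (simplical_face i) id)"
    using continuous_map_simplical_face[OF assms(1) i(1)]
    by (simp add: map_prod_def continuous_map_prod_top continuous_map_id[unfolded id_def])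
  then show "compactin (prod_topology (simplex_top n) X) S"
    unfolding S using x[OF i] by (rule image_compactin[rotated])
qed simp

lemma fst_horn_glue:
  assumes "1 \<le> n" and horn: "\<And>i. i \<le> n \<Longrightarrow> i \<noteq> k \<Longrightarrow> x i \<in> SM X (n - 1)"
  shows "fst ` horn_glue n k x = horn n k"
proof (intro equalityI subsetI)
  fix a
  assume "a \<in> fst ` horn_glue n k x"
  then obtain i b z where "i \<le> n" "i \<noteq> k" "a = simplical_face i b" "(b, z) \<in> x i"
    by (auto simp: mem_horn_glue)
  then show "a \<in> horn n k"
    using SM_subset[OF horn] simplical_face_in_horn[OF assms(1)] by blast
next
  fix a
  assume "a \<in> horn n k"
  then obtain i where i: "i \<le> n" "i \<noteq> k" "a i = 0" and a: "a \<in> standard_simplex n"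
    by (auto simp: horn_def)
  have "codegeneracy i a \<in> standard_simplex (n - 1)"
    using codegeneracy_zero_coordinate_in_standard_simplex[OF a i(1,3)] by simp
  then obtain z where "(codegeneracy i a, z) \<in> x i"
    using horn[OF i(1,2)] by (force simp: SM_def mv_maps_def)
  then have "(a, z) \<in> horn_glue n k x"
    using i simplical_face_codegeneracy[of a i] unfolding mem_horn_glue by metis
  then show "a \<in> fst ` horn_glue n k x"
    by force
qed

lemma finite_fibre_horn_glue:
  assumes horn: "\<And>i. i \<le> n \<Longrightarrow> i \<noteq> k \<Longrightarrow> x i \<in> SM X (n - 1)"
  shows "finite {z. (a, z) \<in> horn_glue n k x}"
proof -
  have "finite {z. (b, z) \<in> x i}" if "i \<in> {..n} - {k}" for i b
  proof (cases "b \<in> standard_simplex (n - 1)")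
    case True
    then show ?thesis
      using horn that by (auto simp: SM_def mv_maps_def)
  next
    case False
    then have "{z. (b, z) \<in> x i} = {}"
      using SM_subset[OF horn] that by auto
    then show ?thesis
      by simp
  qed
  moreover have "{z. (a, z) \<in> horn_glue n k x} \<subseteq> (\<Union>i\<in>{..n} - {k}. {z. (codegeneracy i a, z) \<in> x i})"
    by (auto simp: mem_horn_glue codegeneracy_simplical_face_same)
  ultimately show ?thesis
    by (meson finite_UN_I finite_Diff finite_atMost finite_subset)
qed

lemma horn_filler_in_SM:
  assumes n: "1 \<le> n" "k \<le> n" and horn: "\<And>i. i \<le> n \<Longrightarrow> i \<noteq> k \<Longrightarrow> x i \<in> SM X (n - 1)"
  shows "horn_filler n k x \<in> SM X n"
  unfolding horn_filler_def SM_def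
proof (rule mv_comp_graph_compactin_in_mv_maps)
  show "continuous_map (simplex_top n) (simplex_top n) (horn_retraction n k)"
    using n by (rule continuous_map_horn_retraction)
  show "compactin (prod_topology (simplex_top n) X) (horn_glue n k x)"
    using horn by (intro compactin_horn_glue n(1)) (simp add: SM_def mv_maps_compact_kc_space)
  show "horn_retraction n k ` topspace (simplex_top n) \<subseteq> fst ` horn_glue n k x"
    using horn_retraction_in_horn[OF n] by (auto simp: fst_horn_glue[OF n(1) horn])
  show "finite {z. (horn_retraction n k a, z) \<in> horn_glue n k x}" for a
    using horn by (rule finite_fibre_horn_glue)
qed simp_all

(* b and b' are the images of a single point c of Delta_(m-1) under the two sides of
   delta_j delta_i = delta_i delta_(j-1), and the compatibility condition is evaluated at c. *)
lemma face_compatible_mem_iff: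
  assumes ij: "i < j" "j \<le> Suc m" and b: "b \<in> standard_simplex m"
    and faces: "simplical_face j b = simplical_face i b'"
    and compatible: "mv_comp_graph (simplex_top (m - 1)) (simplical_face i) \<beta>
                       = mv_comp_graph (simplex_top (m - 1)) (simplical_face (j - 1)) \<alpha>"
  shows "(b, z) \<in> \<beta> \<longleftrightarrow> (b', z) \<in> \<alpha>"
proof -
  define c where "c = codegeneracy i b"
  have "b i = 0"
    using fun_cong[OF faces, of i] ij(1) by (simp add: simplical_face_def)
  then have c: "c \<in> standard_simplex (m - 1)" and b_eq: "b = simplical_face i c"
    using codegeneracy_zero_coordinate_in_standard_simplex[OF b] simplical_face_codegeneracy ij
    unfolding c_def by auto
  have "simplical_face i b' = simplical_face j (simplical_face i c)"
    using faces b_eq by simp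
  also have "\<dots> = simplical_face i (simplical_face (j - 1) c)"
    using ij(1) by (rule simplical_face_simplical_face)
  finally have b'_eq: "b' = simplical_face (j - 1) c"
    by simp
  have "(c, z) \<in> mv_comp_graph (simplex_top (m - 1)) (simplical_face i) \<beta>
          \<longleftrightarrow> (c, z) \<in> mv_comp_graph (simplex_top (m - 1)) (simplical_face (j - 1)) \<alpha>"
    by (simp only: compatible)
  then show ?thesis
    using c b_eq b'_eq by (simp add: mv_comp_graph_def)
qed

lemma horn_glue_face:
  assumes n: "1 \<le> n" and i: "i \<le> n" "i \<noteq> k"
    and horn: "\<And>i. i \<le> n \<Longrightarrow> i \<noteq> k \<Longrightarrow> x i \<in> SM X (n - 1)"
    and compatible: "\<And>i j. i < j \<Longrightarrow> j \<le> n \<Longrightarrow> i \<noteq> k \<Longrightarrow> j \<noteq> k \<Longrightarrow>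
                       SM_face (n - 1) i (x j) = SM_face (n - 1) (j - 1) (x i)"
  shows "mv_comp_graph (simplex_top (n - 1)) (simplical_face i) (horn_glue n k x) = x i"
proof (intro equalityI subsetI)
  fix p
  assume "p \<in> mv_comp_graph (simplex_top (n - 1)) (simplical_face i) (horn_glue n k x)"
  then obtain b z j b' where p: "p = (b, z)" and b: "b \<in> standard_simplex (n - 1)"
    and j: "j \<le> n" "j \<noteq> k" and faces: "simplical_face i b = simplical_face j b'"
    and b'z: "(b', z) \<in> x j"
    by (auto simp: mv_comp_graph_def mem_horn_glue)
  have b': "b' \<in> standard_simplex (n - 1)"
    using SM_subset[OF horn[OF j]] b'z by auto
  have le: "i \<le> Suc (n - 1)" "j \<le> Suc (n - 1)"
    using i j by auto
  consider "j = i" | "j < i" | "i < j"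
    by linarith
  then show "p \<in> x i"
  proof cases
    case 1
    then show ?thesis
      using faces b'z p by simp
  next
    case 2
    then show ?thesis
      using face_compatible_mem_iff[OF 2 le(1) b faces
          compatible[OF 2 i(1) j(2) i(2), unfolded SM_face_def]] b'z p
      by simp
  next
    case 3
    then show ?thesis
      using face_compatible_mem_iff[OF 3 le(2) b' faces[symmetric]
          compatible[OF 3 j(1) i(2) j(2), unfolded SM_face_def]] b'z p
      by simp
  qed
next
  fix p
  assume "p \<in> x i"
  then show "p \<in> mv_comp_graph (simplex_top (n - 1)) (simplical_face i) (horn_glue n k x)"
    using SM_subset[OF horn[OF i]] i by (force simp: mv_comp_graph_def mem_horn_glue)
qed

lemma SM_face_horn_filler:
  assumes n: "1 \<le> n" "k \<le> n" and i: "i \<le> n" "i \<noteq> k"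
    and horn: "\<And>i. i \<le> n \<Longrightarrow> i \<noteq> k \<Longrightarrow> x i \<in> SM X (n - 1)"
    and compatible: "\<And>i j. i < j \<Longrightarrow> j \<le> n \<Longrightarrow> i \<noteq> k \<Longrightarrow> j \<noteq> k \<Longrightarrow>
                       SM_face (n - 1) i (x j) = SM_face (n - 1) (j - 1) (x i)"
  shows "SM_face n i (horn_filler n k x) = x i"
proof -
  have face_in_horn: "simplical_face i b \<in> horn n k" if "b \<in> topspace (simplex_top (n - 1))" for b
    using simplical_face_in_horn[OF n(1) i] that by simp
  have "SM_face n i (horn_filler n k x)
          = mv_comp_graph (simplex_top (n - 1)) (horn_retraction n k \<circ> simplical_face i) (horn_glue n k x)"
    unfolding SM_face_def horn_filler_def
    using face_in_horn by (intro mv_comp_graph_comp) (simp add: horn_def)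
  also have "\<dots> = mv_comp_graph (simplex_top (n - 1)) (simplical_face i) (horn_glue n k x)"
    using face_in_horn horn_retraction_fixpoint[OF n(1)] by (intro mv_comp_graph_cong) simp
  also have "\<dots> = x i"
    using n(1) i horn compatible by (rule horn_glue_face)
  finally show ?thesis .
qed

theorem mainTheorem8:
  fixes X :: "'a topology"
  shows "kan_complex (SM X) SM_face SM_degen"
  unfolding kan_complex_def
proof (intro conjI SM_simplicial_set allI impI)
  fix n k and x :: "nat \<Rightarrow> ((nat \<Rightarrow> real) \<times> 'a) set"
  assume hyps: "1 \<le> n \<and> k \<le> n \<and> (\<forall>i. i \<le> n \<and> i \<noteq> k \<longrightarrow> x i \<in> SM X (n - 1))
    \<and> (\<forall>i j. i < j \<and> j \<le> n \<and> i \<noteq> k \<and> j \<noteq> k \<longrightarrow> SM_face (n - 1) i (x j) = SM_face (n - 1) (j - 1) (x i))"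
  then have n: "1 \<le> n" "k \<le> n"
    by simp_all
  have horn: "\<And>i. i \<le> n \<Longrightarrow> i \<noteq> k \<Longrightarrow> x i \<in> SM X (n - 1)"
    using hyps by blast
  have compatible: "\<And>i j. i < j \<Longrightarrow> j \<le> n \<Longrightarrow> i \<noteq> k \<Longrightarrow> j \<noteq> k \<Longrightarrow>
                      SM_face (n - 1) i (x j) = SM_face (n - 1) (j - 1) (x i)"
    using hyps by blast
  show "\<exists>y\<in>SM X n. \<forall>i. i \<le> n \<and> i \<noteq> k \<longrightarrow> SM_face n i y = x i"
  proof (intro bexI allI impI)
    show "horn_filler n k x \<in> SM X n"
      using n horn by (rule horn_filler_in_SM)
    show "SM_face n i (horn_filler n k x) = x i" if "i \<le> n \<and> i \<noteq> k" for i
      using that by (intro SM_face_horn_filler[OF n _ _ horn compatible]) simp_all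
  qed
qed

end
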